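(* Let $G$ be a connected graph with no isolated vertices and with $\gamma(G)>1$. Then $$\gamma_t(G) \le \gamma(G) + \tfrac{1}{2}\gamma_c(G).$$ Moreover, this bound is tight: there exists such a graph attaining equality.
   Context: All graphs are finite, simple and undirected. A set $S\subseteq V(G)$ is a dominating set if every vertex not in $S$ is adjacent to some vertex of $S$; $\gamma(G)$ is the minimum size of a dominating set. A set $S$ is a total dominating set if every vertex of $G$ (including those in $S$) is adjacent to some vertex of $S$; $\gamma_t(G)$ is the minimum size of a total dominating set (it exists iff $G$ has no isolated vertices). A set $S$ is a connected dominating set if it is dominating and the subgraph induced by $S$ is connected; $\gamma_c(G)$ is the minimum size of a connected dominating set (it exists iff $G$ is connected). "Isolated-free" means having no isolated vertices. *)

theory Defs
  imports Complex_Main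
begin

definition simple_graph :: "'a set \<Rightarrow> ('a \<Rightarrow> 'a \<Rightarrow> bool) \<Rightarrow> bool" where
  "simple_graph V E \<longleftrightarrow> finite V \<and> (\<forall>u v. E u v \<longrightarrow> u \<in> V \<and> v \<in> V)
     \<and> (\<forall>u v. E u v \<longrightarrow> E v u) \<and> (\<forall>v. \<not> E v v)"

definition isolated_free :: "'a set \<Rightarrow> ('a \<Rightarrow> 'a \<Rightarrow> bool) \<Rightarrow> bool" where
  "isolated_free V E \<longleftrightarrow> (\<forall>v\<in>V. \<exists>u\<in>V. E v u)"

definition connected_graph :: "'a set \<Rightarrow> ('a \<Rightarrow> 'a \<Rightarrow> bool) \<Rightarrow> bool" where
  "connected_graph V E \<longleftrightarrow> V \<noteq> {} \<and> (\<forall>u\<in>V. \<forall>v\<in>V. E\<^sup>*\<^sup>* u v)"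

definition dominating :: "'a set \<Rightarrow> ('a \<Rightarrow> 'a \<Rightarrow> bool) \<Rightarrow> 'a set \<Rightarrow> bool" where
  "dominating V E S \<longleftrightarrow> S \<subseteq> V \<and> (\<forall>v\<in>V - S. \<exists>s\<in>S. E v s)"

definition total_dominating :: "'a set \<Rightarrow> ('a \<Rightarrow> 'a \<Rightarrow> bool) \<Rightarrow> 'a set \<Rightarrow> bool" where
  "total_dominating V E S \<longleftrightarrow> S \<subseteq> V \<and> (\<forall>v\<in>V. \<exists>s\<in>S. E v s)"

definition connected_dominating :: "'a set \<Rightarrow> ('a \<Rightarrow> 'a \<Rightarrow> bool) \<Rightarrow> 'a set \<Rightarrow> bool" where
  "connected_dominating V E S \<longleftrightarrow> dominating V E S \<and>
     connected_graph S (\<lambda>u v. E u v \<and> u \<in> S \<and> v \<in> S)"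

definition domination_number :: "'a set \<Rightarrow> ('a \<Rightarrow> 'a \<Rightarrow> bool) \<Rightarrow> nat" where
  "domination_number V E = (LEAST k. \<exists>S. dominating V E S \<and> card S = k)"

definition total_domination_number :: "'a set \<Rightarrow> ('a \<Rightarrow> 'a \<Rightarrow> bool) \<Rightarrow> nat" where
  "total_domination_number V E = (LEAST k. \<exists>S. total_dominating V E S \<and> card S = k)"

definition connected_domination_number :: "'a set \<Rightarrow> ('a \<Rightarrow> 'a \<Rightarrow> bool) \<Rightarrow> nat" where
  "connected_domination_number V E = (LEAST k. \<exists>S. connected_dominating V E S \<and> card S = k)"

end

theory Submission
  imports Defs
begin

text \<open>Two upper bounds on \<open>\<gamma>\<^sub>t\<close> are averaged. Giving every vertex of a minimum dominating set
a neighbour yields a total dominating set, so \<open>\<gamma>\<^sub>t \<le> 2\<gamma>\<close>. A connected dominating set with at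
least two vertices is total, since each of its vertices has a neighbour inside it; as
\<open>\<gamma>\<^sub>c \<ge> \<gamma> > 1\<close>, this gives \<open>\<gamma>\<^sub>t \<le> \<gamma>\<^sub>c\<close>. Hence \<open>\<gamma>\<^sub>t \<le> (2\<gamma> + \<gamma>\<^sub>c)/2\<close>. Equality holds for the path
\<open>P\<^sub>6\<close>: there \<open>\<gamma> = 2\<close> and \<open>\<gamma>\<^sub>t = 4\<close>, and \<open>\<gamma>\<^sub>c = 4\<close> because the four inner vertices form a
connected dominating set while \<open>\<gamma>\<^sub>t \<le> \<gamma>\<^sub>c\<close>.\<close>

lemma domination_number_le: "dominating V E S \<Longrightarrow> domination_number V E \<le> card S"
  unfolding domination_number_def by (rule Least_le) blast

lemma total_domination_number_le:
  "total_dominating V E S \<Longrightarrow> total_domination_number V E \<le> card S"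
  unfolding total_domination_number_def by (rule Least_le) blast

lemma connected_domination_number_le:
  "connected_dominating V E S \<Longrightarrow> connected_domination_number V E \<le> card S"
  unfolding connected_domination_number_def by (rule Least_le) blast

lemma domination_number_attained: "\<exists>S. dominating V E S \<and> card S = domination_number V E"
proof -
  have "dominating V E V" by (simp add: dominating_def)
  then have "\<exists>k S. dominating V E S \<and> card S = k" by blast
  then show ?thesis unfolding domination_number_def by (rule LeastI_ex)
qed

lemma connected_domination_number_attained:
  assumes "simple_graph V E" "connected_graph V E"
  shows "\<exists>S. connected_dominating V E S \<and> card S = connected_domination_number V E"
proof -
  have "(\<lambda>u v. E u v \<and> u \<in> V \<and> v \<in> V) = E"
    using assms(1) unfolding simple_graph_def by (intro ext) blast
  then have "connected_dominating V E V"
    using assms(2) by (simp add: connected_dominating_def dominating_def)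
  then have "\<exists>k S. connected_dominating V E S \<and> card S = k" by blast
  then show ?thesis unfolding connected_domination_number_def by (rule LeastI_ex)
qed

lemma connected_graph_neighbour:
  assumes "connected_graph V E" "1 < card V" "v \<in> V"
  obtains w where "E v w"
proof -
  have "finite V" using assms(2) card.infinite by fastforce
  then obtain u where u: "u \<in> V" "u \<noteq> v"
    using assms(2,3) card_le_Suc0_iff_eq[of V] by auto
  have "E\<^sup>*\<^sup>* v u" using assms(1,3) u(1) by (simp add: connected_graph_def)
  then show ?thesis
    using u(2) that by (cases rule: converse_rtranclpE) auto
qed

lemma connected_dominating_imp_total_dominating:
  assumes "connected_dominating V E S" "1 < card S"
  shows "total_dominating V E S"
proof -
  have dom: "dominating V E S" and conn: "connected_graph S (\<lambda>u v. E u v \<and> u \<in> S \<and> v \<in> S)"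
    using assms(1) by (simp_all add: connected_dominating_def)
  have "\<exists>s\<in>S. E v s" if "v \<in> S" for v
    using connected_graph_neighbour[OF conn assms(2) that] by blast
  with dom show ?thesis by (auto simp: dominating_def total_dominating_def)
qed

lemma total_domination_number_le_double:
  assumes "finite V" "isolated_free V E"
  shows "total_domination_number V E \<le> 2 * domination_number V E"
proof -
  obtain D where D: "dominating V E D" "card D = domination_number V E"
    using domination_number_attained by blast
  have "finite D" using D(1) assms(1) by (meson dominating_def finite_subset)
  have "\<forall>d\<in>D. \<exists>u\<in>V. E d u" using assms(2) D(1) by (auto simp: isolated_free_def dominating_def)
  then obtain f where f: "\<forall>d\<in>D. f d \<in> V \<and> E d (f d)" by metis
  have "total_dominating V E (D \<union> f ` D)"
    using D(1) f unfolding total_dominating_def dominating_def by blast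
  then have "total_domination_number V E \<le> card (D \<union> f ` D)"
    by (rule total_domination_number_le)
  also have "\<dots> \<le> card D + card (f ` D)" by (rule card_Un_le)
  also have "\<dots> \<le> 2 * card D" using card_image_le[OF \<open>finite D\<close>, of f] by simp
  finally show ?thesis using D(2) by simp
qed

lemma total_domination_number_le_connected:
  assumes "simple_graph V E" "connected_graph V E" "1 < domination_number V E"
  shows "total_domination_number V E \<le> connected_domination_number V E"
proof -
  obtain C where C: "connected_dominating V E C" "card C = connected_domination_number V E"
    using connected_domination_number_attained[OF assms(1,2)] by blast
  have "domination_number V E \<le> card C"
    using C(1) by (intro domination_number_le) (simp add: connected_dominating_def)
  with assms(3) have "1 < card C" by linarith
  with C(1) have "total_dominating V E C" by (rule connected_dominating_imp_total_dominating)
  then show ?thesis using C(2) by (metis total_domination_number_le)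
qed

lemma total_domination_number_bound:
  assumes "simple_graph V E" "connected_graph V E" "isolated_free V E"
    and "1 < domination_number V E"
  shows "real (total_domination_number V E)
           \<le> real (domination_number V E) + real (connected_domination_number V E) / 2"
proof -
  have "finite V" using assms(1) by (simp add: simple_graph_def)
  have "total_domination_number V E \<le> 2 * domination_number V E"
    using \<open>finite V\<close> assms(3) by (rule total_domination_number_le_double)
  moreover have "total_domination_number V E \<le> connected_domination_number V E"
    using assms(1,2,4) by (rule total_domination_number_le_connected)
  ultimately show ?thesis by linarith
qed

definition path_adj :: "nat \<Rightarrow> nat \<Rightarrow> nat \<Rightarrow> bool" where
  "path_adj n u v \<longleftrightarrow> u < n \<and> v < n \<and> (v = Suc u \<or> u = Suc v)"

lemma connected_graph_interval:
  assumes "a < b" and consecutive: "\<And>i. a \<le> i \<Longrightarrow> Suc i < b \<Longrightarrow> E i (Suc i) \<and> E (Suc i) i"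
  shows "connected_graph {a..<b} E"
proof -
  have walk: "E\<^sup>*\<^sup>* i j \<and> E\<^sup>*\<^sup>* j i" if "a \<le> i" "i \<le> j" "j < b" for i j
    using that(2,3)
  proof (induction j rule: dec_induct)
    case base
    show ?case by simp
  next
    case (step k)
    then have "E k (Suc k)" "E (Suc k) k" using \<open>a \<le> i\<close> consecutive[of k] by simp_all
    then show ?case
      using step by (meson rtranclp.rtrancl_into_rtrancl converse_rtranclp_into_rtranclp Suc_lessD)
  qed
  have "E\<^sup>*\<^sup>* i j" if "i \<in> {a..<b}" "j \<in> {a..<b}" for i j
    using walk[of i j] walk[of j i] that by (cases "i \<le> j") auto
  then show ?thesis using assms(1) by (auto simp: connected_graph_def)
qed

lemma simple_graph_path: "simple_graph {0..<n} (path_adj n)"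
  by (auto simp: simple_graph_def path_adj_def)

lemma connected_graph_path: "0 < n \<Longrightarrow> connected_graph {0..<n} (path_adj n)"
  by (rule connected_graph_interval) (auto simp: path_adj_def)

lemma isolated_free_path: "1 < n \<Longrightarrow> isolated_free {0..<n} (path_adj n)"
  unfolding isolated_free_def
proof
  fix v assume "1 < n" "v \<in> {0..<n}"
  then show "\<exists>u\<in>{0..<n}. path_adj n v u"
    by (intro bexI[of _ "if v = 0 then 1 else v - 1"]) (auto simp: path_adj_def)
qed

lemma dominating_path6_card:
  assumes "dominating {0..<6} (path_adj 6) S"
  shows "2 \<le> card S"
proof -
  have "finite S" using assms by (auto simp: dominating_def intro: finite_subset)
  have nbr: "v \<in> S \<or> (\<exists>s\<in>S. path_adj 6 v s)" if "v < 6" for v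
    using assms that by (auto simp: dominating_def)
  obtain a where a: "a \<in> S" "a \<le> 1" using nbr[of 0] by (auto simp: path_adj_def)
  obtain b where b: "b \<in> S" "4 \<le> b" using nbr[of 5] by (auto simp: path_adj_def)
  have "card {a, b} \<le> card S" using a b \<open>finite S\<close> by (intro card_mono) auto
  then show ?thesis using a b by simp
qed

lemma total_dominating_path6_card:
  assumes "total_dominating {0..<6} (path_adj 6) S"
  shows "4 \<le> card S"
proof -
  have "finite S" using assms by (auto simp: total_dominating_def intro: finite_subset)
  have nbr: "\<exists>s\<in>S. path_adj 6 v s" if "v < 6" for v
    using assms that by (simp add: total_dominating_def)
  have "1 \<in> S" using nbr[of 0] by (auto simp: path_adj_def)
  moreover have "4 \<in> S" using nbr[of 5] by (auto simp: path_adj_def)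
  moreover obtain a where "a \<in> S" "a = 0 \<or> a = 2" using nbr[of 1] by (auto simp: path_adj_def)
  moreover obtain b where "b \<in> S" "b = 3 \<or> b = 5" using nbr[of 4] by (auto simp: path_adj_def)
  ultimately have "{1, 4, a, b} \<subseteq> S" "card {1, 4, a, b} = 4" by auto
  then show ?thesis using card_mono[OF \<open>finite S\<close>, of "{1, 4, a, b}"] by simp
qed

lemma path6_neighbour_in_middle: "v < 6 \<Longrightarrow> \<exists>s\<in>{1..<5}. path_adj 6 v s"
  by (intro bexI[of _ "if v < 2 then v + 1 else v - 1"]) (auto simp: path_adj_def)

lemma domination_number_path6: "domination_number {0..<6} (path_adj 6) = 2"
  unfolding domination_number_def
proof (rule Least_equality)
  show "\<exists>S. dominating {0..<6} (path_adj 6) S \<and> card S = 2"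
    by (intro exI[of _ "{1, 4}"]) (auto simp: dominating_def path_adj_def)
qed (auto dest: dominating_path6_card)

lemma total_domination_number_path6: "total_domination_number {0..<6} (path_adj 6) = 4"
  unfolding total_domination_number_def
proof (rule Least_equality)
  show "\<exists>S. total_dominating {0..<6} (path_adj 6) S \<and> card S = 4"
    using path6_neighbour_in_middle by (intro exI[of _ "{1..<5}"]) (auto simp: total_dominating_def)
qed (auto dest: total_dominating_path6_card)

lemma connected_domination_number_path6: "connected_domination_number {0..<6} (path_adj 6) = 4"
proof (rule antisym)
  have "dominating {0..<6} (path_adj 6) {1..<5}"
    using path6_neighbour_in_middle by (auto simp: dominating_def)
  moreover have "connected_graph {1..<5}
      (\<lambda>u v. path_adj 6 u v \<and> u \<in> {1..<5} \<and> v \<in> {1..<5})"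
    by (rule connected_graph_interval) (auto simp: path_adj_def)
  ultimately have "connected_dominating {0..<6} (path_adj 6) {1..<5}"
    by (simp add: connected_dominating_def)
  then show "connected_domination_number {0..<6} (path_adj 6) \<le> 4"
    using connected_domination_number_le by fastforce
  show "4 \<le> connected_domination_number {0..<6} (path_adj 6)"
    using total_domination_number_le_connected[OF simple_graph_path connected_graph_path, of 6]
    by (simp add: domination_number_path6 total_domination_number_path6)
qed

theorem theorem2p1:
  shows "(\<forall>(V :: 'a set) E. simple_graph V E \<and> connected_graph V E \<and> isolated_free V E
            \<and> domination_number V E > 1 \<longrightarrow>
            real (total_domination_number V E)
              \<le> real (domination_number V E) + real (connected_domination_number V E) / 2)
       \<and> (\<exists>(V :: nat set) E. simple_graph V E \<and> connected_graph V E \<and> isolated_free V E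
            \<and> domination_number V E > 1 \<and>
            real (total_domination_number V E)
              = real (domination_number V E) + real (connected_domination_number V E) / 2)"
proof (intro conjI allI impI)
  fix V :: "'a set" and E
  assume "simple_graph V E \<and> connected_graph V E \<and> isolated_free V E \<and> domination_number V E > 1"
  then show "real (total_domination_number V E)
               \<le> real (domination_number V E) + real (connected_domination_number V E) / 2"
    using total_domination_number_bound by blast
next
  show "\<exists>(V :: nat set) E. simple_graph V E \<and> connected_graph V E \<and> isolated_free V E
          \<and> domination_number V E > 1 \<and>
          real (total_domination_number V E)
            = real (domination_number V E) + real (connected_domination_number V E) / 2"
    by (intro exI[of _ "{0..<6}"] exI[of _ "path_adj 6"])
      (simp add: simple_graph_path connected_graph_path isolated_free_path domination_number_path6
        total_domination_number_path6 connected_domination_number_path6)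
qed

end
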